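(* In the setting described in the context, the following hold. (i) $\mathcal P_{\mathcal C}+\mathcal P_{\mathcal N}=M(M^TM)^{-1}M^T$, the orthogonal projection onto $\mathrm{col}(M)$. (ii) $$\mathcal P_{\mathcal C}=\sum_{i=r+1}^{r+s}\frac{1}{1-\sigma_i^2}\tilde Z_i\tilde Z_i^T-\sum_{i=r+1}^{r+s}\frac{\sigma_i}{1-\sigma_i^2}\tilde Z_i\tilde W_i^T+\sum_{i=r+s+1}^p\tilde Z_i\tilde Z_i^T,$$ $$\mathcal P_{\mathcal N}=\sum_{i=r+1}^{r+s}\frac{1}{1-\sigma_i^2}\tilde W_i\tilde W_i^T-\sum_{i=r+1}^{r+s}\frac{\sigma_i}{1-\sigma_i^2}\tilde W_i\tilde Z_i^T+\sum_{i=r+s+1}^K\tilde W_i\tilde W_i^T.$$ (iii) For any $x\in\mathrm{col}(\tilde Z_{(r+1):p})$ and $y\in\mathrm{col}(\tilde W_{(r+1):K})$: $\mathcal P_{\mathcal C}(x+y)=x$ and $\mathcal P_{\mathcal N}(x+y)=y$. (iv) For any $x\in\mathbb{R}^n$: $\|\mathcal P_{\mathcal C}^Tx\|\ge\|\tilde Z_{(r+1):p}^Tx\|$.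
   Context: Let $Z\in\mathbb{R}^{n\times p}$ and $W\in\mathbb{R}^{n\times K}$ have orthonormal columns (spanning $\mathrm{col}(X)$ and $S_K(P)$ respectively). Let $Z^TW=U\Sigma V^T$ be an SVD with $U\in\mathbb{R}^{p\times p}$, $V\in\mathbb{R}^{K\times K}$ orthogonal and singular values on the diagonal of $\Sigma$: $\sigma_1=\dots=\sigma_r=1>\sigma_{r+1}\ge\dots\ge\sigma_{r+s}>0=\sigma_{r+s+1}=\cdots$. Put $\tilde Z=ZU$, $\tilde W=WV$; $M_i$ denotes column $i$ and $M_{i:j}$ columns $i$ through $j$ of a matrix. Let $M=(\tilde Z_{(r+1):p},\tilde W_{(r+1):K})$ and $\mathcal P_{\mathcal C}=(\tilde Z_{(r+1):p},0_{n\times(K-r)})(M^TM)^{-1}M^T$, $\mathcal P_{\mathcal N}=(0_{n\times(p-r)},\tilde W_{(r+1):K})(M^TM)^{-1}M^T$. $\|\cdot\|$ is the Euclidean norm. *)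

theory Defs
  imports Jordan_Normal_Form.Gauss_Jordan_Elimination
begin

(* columns a, ..., b-1 (0-based) of A; paper's M_{(a+1):b} *)
definition col_range :: "'a mat \<Rightarrow> nat \<Rightarrow> nat \<Rightarrow> 'a mat" where
  "col_range A a b = mat (dim_row A) (b - a) (\<lambda>(i,j). A $$ (i, a + j))"

definition hcat :: "'a::zero mat \<Rightarrow> 'a mat \<Rightarrow> 'a mat" where
  "hcat A B = four_block_mat A B (0\<^sub>m 0 (dim_col A)) (0\<^sub>m 0 (dim_col B))"

definition outer :: "'a::times vec \<Rightarrow> 'a vec \<Rightarrow> 'a mat" where
  "outer v w = mat (dim_vec v) (dim_vec w) (\<lambda>(i,j). v $ i * w $ j)"

definition sum_mats :: "nat \<Rightarrow> nat \<Rightarrow> (nat \<Rightarrow> 'a::monoid_add mat) \<Rightarrow> nat \<Rightarrow> nat \<Rightarrow> 'a mat" where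
  "sum_mats nr nc f a b = foldr (\<lambda>i A. f i + A) [a..<b] (0\<^sub>m nr nc)"

definition minv :: "'a::field mat \<Rightarrow> 'a mat" where
  "minv A = the (mat_inverse A)"

definition vnorm :: "real vec \<Rightarrow> real" where
  "vnorm v = sqrt (v \<bullet> v)"

end

theory Submission
  imports Defs Jordan_Normal_Form.Determinant
begin

(* After the rotations, Zt^T Wt = Sig is diagonal, so for A = Zt_(r+1):p and B = Wt_(r+1):K the
   Gram matrix of M = (A, B) is [[I, D], [D^T, I]] with D diagonal and entries sigma_i < 1.  It
   decouples into 2x2 blocks [[1, sigma], [sigma, 1]], whose inverses
   (1 - sigma^2)^-1 [[1, -sigma], [-sigma, 1]] give (M^T M)^-1 explicitly; expanding P_C and P_N
   with it yields (ii).  Parts (i) and (iii) hold for M H M^T whenever H M^T M = I, and (iv) is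
   Bessel's inequality for the orthonormal columns of A, using P_C A = A. *)

section \<open>Column ranges and horizontal concatenation\<close>

lemma col_range_carrier [simp]: "col_range A a b \<in> carrier_mat (dim_row A) (b - a)"
  by (simp add: col_range_def)

lemma dim_col_range [simp]:
  "dim_row (col_range A a b) = dim_row A" "dim_col (col_range A a b) = b - a"
  by (simp_all add: col_range_def)

lemma index_col_range [simp]:
  "i < dim_row A \<Longrightarrow> j < b - a \<Longrightarrow> col_range A a b $$ (i, j) = A $$ (i, a + j)"
  by (simp add: col_range_def)

lemma transpose_col_range_mult_col_range:
  assumes "dim_row X = dim_row Y" "b \<le> dim_col X" "d \<le> dim_col Y"
  shows "transpose_mat (col_range X a b) * col_range Y c d
       = mat (b - a) (d - c) (\<lambda>(i, j). (transpose_mat X * Y) $$ (a + i, c + j))"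
  using assms by (intro eq_matI) (auto simp: scalar_prod_def)

lemma col_range_mult:
  assumes "b \<le> dim_col M"
  shows "col_range (P * M) a b = P * col_range M a b"
  using assms by (intro eq_matI) (auto simp: scalar_prod_def)

lemma hcat_carrier:
  "A \<in> carrier_mat n a \<Longrightarrow> B \<in> carrier_mat n b \<Longrightarrow> hcat A B \<in> carrier_mat n (a + b)"
  by (auto simp: hcat_def)

lemma col_range_hcat_left: "col_range (hcat A B) 0 (dim_col A) = A"
  by (intro eq_matI) (auto simp: hcat_def)

lemma transpose_hcat_mult_hcat:
  assumes "A \<in> carrier_mat n a" "B \<in> carrier_mat n b" "C \<in> carrier_mat n c" "D \<in> carrier_mat n d"
  shows "transpose_mat (hcat A B) * hcat C D
       = four_block_mat (transpose_mat A * C) (transpose_mat A * D) (transpose_mat B * C) (transpose_mat B * D)"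
  unfolding hcat_def using assms
  by (subst transpose_four_block_mat[of _ n a _ b _ 0], auto,
      subst mult_four_block_mat[of _ a n _ 0 _ b _ _ c _ d], auto)

lemma hcat_mult_four_block_mat:
  assumes "X \<in> carrier_mat n a" "Y \<in> carrier_mat n b" "P \<in> carrier_mat a c" "Q \<in> carrier_mat a d"
    "R \<in> carrier_mat b c" "T \<in> carrier_mat b d"
  shows "hcat X Y * four_block_mat P Q R T = hcat (X * P + Y * R) (X * Q + Y * T)"
  unfolding hcat_def using assms
  by (subst mult_four_block_mat[of _ n a _ b _ 0 _ _ c _ d]) auto

lemma hcat_mult_transpose_hcat:
  assumes "X \<in> carrier_mat n a" "Y \<in> carrier_mat n b" "A \<in> carrier_mat m a" "B \<in> carrier_mat m b"
  shows "hcat X Y * transpose_mat (hcat A B) = X * transpose_mat A + Y * transpose_mat B"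
proof -
  have "hcat X Y * transpose_mat (hcat A B)
      = four_block_mat (X * transpose_mat A + Y * transpose_mat B) (X * 0\<^sub>m a 0 + Y * 0\<^sub>m b 0)
          (0\<^sub>m 0 a * transpose_mat A + 0\<^sub>m 0 b * transpose_mat B) (0\<^sub>m 0 a * 0\<^sub>m a 0 + 0\<^sub>m 0 b * 0\<^sub>m b 0)"
    unfolding hcat_def using assms
    by (subst transpose_four_block_mat[of _ m a _ b _ 0], auto,
        subst mult_four_block_mat[of _ n a _ b _ 0 _ _ m _ 0], auto)
  also have "\<dots> = X * transpose_mat A + Y * transpose_mat B"
    using assms by (intro eq_matI) auto
  finally show ?thesis .
qed

lemma hcat_mult_append_vec:
  assumes "A \<in> carrier_mat n a" "B \<in> carrier_mat n b" "c \<in> carrier_vec a" "d \<in> carrier_vec b"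
  shows "hcat A B *\<^sub>v (c @\<^sub>v d) = A *\<^sub>v c + B *\<^sub>v d"
  unfolding hcat_def using assms
  by (subst four_block_mat_mult_vec[of _ n a _ b _ 0]) (auto intro!: eq_vecI)

lemma hcat_add:
  assumes "A \<in> carrier_mat n a" "B \<in> carrier_mat n b" "C \<in> carrier_mat n a" "D \<in> carrier_mat n b"
  shows "hcat A B + hcat C D = hcat (A + C) (B + D)"
  unfolding hcat_def using assms
  by (subst add_four_block_mat[of _ n a _ b _ 0]) auto

section \<open>Rectangular diagonal matrices and sums of outer products\<close>

definition rect_diag_mat :: "nat \<Rightarrow> nat \<Rightarrow> (nat \<Rightarrow> 'a::zero) \<Rightarrow> 'a mat" where
  "rect_diag_mat a b f = mat a b (\<lambda>(i, j). if i = j then f i else 0)"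

lemma rect_diag_mat_carrier [simp]: "rect_diag_mat a b f \<in> carrier_mat a b"
  by (simp add: rect_diag_mat_def)

lemma dim_rect_diag_mat [simp]:
  "dim_row (rect_diag_mat a b f) = a" "dim_col (rect_diag_mat a b f) = b"
  by (simp_all add: rect_diag_mat_def)

lemma index_rect_diag_mat [simp]:
  "i < a \<Longrightarrow> j < b \<Longrightarrow> rect_diag_mat a b f $$ (i, j) = (if i = j then f i else 0)"
  by (simp add: rect_diag_mat_def)

lemma transpose_rect_diag_mat: "transpose_mat (rect_diag_mat a b f) = rect_diag_mat b a f"
  by (intro eq_matI) auto

lemma one_eq_rect_diag_mat: "1\<^sub>m a = rect_diag_mat a a (\<lambda>_. 1)"
  by (intro eq_matI) auto

lemma zero_eq_rect_diag_mat: "0\<^sub>m a b = rect_diag_mat a b (\<lambda>_. 0)"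
  by (intro eq_matI) auto

lemma rect_diag_mat_cong:
  "(\<And>i. i < a \<Longrightarrow> i < b \<Longrightarrow> f i = g i) \<Longrightarrow> rect_diag_mat a b f = rect_diag_mat a b g"
  by (intro eq_matI) auto

lemma rect_diag_mat_add:
  fixes f g :: "nat \<Rightarrow> 'a::monoid_add"
  shows "rect_diag_mat a b f + rect_diag_mat a b g = rect_diag_mat a b (\<lambda>i. f i + g i)"
  by (intro eq_matI) auto

lemma mult_rect_diag_mat:
  fixes X :: "'a::comm_ring_1 mat"
  assumes "X \<in> carrier_mat n a"
  shows "X * rect_diag_mat a b f = mat n b (\<lambda>(i, j). if j < a then X $$ (i, j) * f j else 0)"
  using assms by (intro eq_matI) (auto simp: scalar_prod_def if_distrib[of "(*) _"] cong: if_cong)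

lemma rect_diag_mat_mult_rect_diag_mat:
  fixes f g :: "nat \<Rightarrow> 'a::comm_ring_1"
  shows "rect_diag_mat a b f * rect_diag_mat b c g
       = rect_diag_mat a c (\<lambda>i. if i < b then f i * g i else 0)"
  by (subst mult_rect_diag_mat[of _ a b]) (auto intro!: eq_matI)

lemma index_mult_rect_diag_mat_mult_transpose:
  fixes X Y :: "'a::comm_ring_1 mat"
  assumes "X \<in> carrier_mat n a" "Y \<in> carrier_mat m b" "i < n" "j < m"
  shows "(X * rect_diag_mat a b f * transpose_mat Y) $$ (i, j)
       = (\<Sum>l<min a b. f l * (X $$ (i, l) * Y $$ (j, l)))"
proof -
  have "(X * rect_diag_mat a b f * transpose_mat Y) $$ (i, j)
      = (\<Sum>l<b. if l < a then f l * (X $$ (i, l) * Y $$ (j, l)) else 0)"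
    using assms by (subst mult_rect_diag_mat[of _ n])
      (auto simp: scalar_prod_def lessThan_atLeast0 ac_simps intro!: sum.cong)
  also have "\<dots> = (\<Sum>l<min a b. f l * (X $$ (i, l) * Y $$ (j, l)))"
  proof -
    have "{..<b} \<inter> {..<a} = {..<min a b}" by auto
    then show ?thesis by (simp add: sum.If_cases lessThan_def[symmetric])
  qed
  finally show ?thesis .
qed

lemma
  assumes "\<And>l. a \<le> l \<Longrightarrow> l < b \<Longrightarrow> f l \<in> carrier_mat nr nc"
  shows sum_mats_carrier: "sum_mats nr nc f a b \<in> carrier_mat nr nc"
    and index_sum_mats: "i < nr \<Longrightarrow> j < nc \<Longrightarrow>
      sum_mats nr nc f a b $$ (i, j) = (\<Sum>l\<in>{a..<b}. f l $$ (i, j))"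
proof -
  have "\<forall>l\<in>set xs. f l \<in> carrier_mat nr nc \<Longrightarrow>
    foldr (\<lambda>l S. f l + S) xs (0\<^sub>m nr nc) \<in> carrier_mat nr nc \<and>
    (\<forall>i<nr. \<forall>j<nc. foldr (\<lambda>l S. f l + S) xs (0\<^sub>m nr nc) $$ (i, j)
       = sum_list (map (\<lambda>l. f l $$ (i, j)) xs))" for xs
    by (induction xs) auto
  from this[of "[a..<b]"] show "sum_mats nr nc f a b \<in> carrier_mat nr nc"
    and "i < nr \<Longrightarrow> j < nc \<Longrightarrow> sum_mats nr nc f a b $$ (i, j) = (\<Sum>l\<in>{a..<b}. f l $$ (i, j))"
    using assms by (simp_all add: sum_mats_def sum_list_distinct_conv_sum_set)
qed

lemma index_col_range_rect_diag_mult_transpose: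
  fixes X Y :: "real mat"
  assumes X: "X \<in> carrier_mat n m" and Y: "Y \<in> carrier_mat n' m'" and rs: "r + s \<le> min m m'"
    and i: "i < n" and j: "j < n'"
  shows "(col_range X r m * rect_diag_mat (m - r) (m' - r) (\<lambda>l. if l < s then c (r + l) else e)
          * transpose_mat (col_range Y r m')) $$ (i, j)
    = (\<Sum>l\<in>{r..<r + s}. c l * (X $$ (i, l) * Y $$ (j, l)))
      + e * (\<Sum>l\<in>{r + s..<min m m'}. X $$ (i, l) * Y $$ (j, l))"
proof -
  let ?g = "\<lambda>l. (if l < r + s then c l else e) * (X $$ (i, l) * Y $$ (j, l))"
  have "(col_range X r m * rect_diag_mat (m - r) (m' - r) (\<lambda>l. if l < s then c (r + l) else e)
          * transpose_mat (col_range Y r m')) $$ (i, j) = (\<Sum>l\<in>{0..<min m m' - r}. ?g (r + l))"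
    using X Y i j
    by (subst index_mult_rect_diag_mat_mult_transpose[of _ n "m - r" _ n' "m' - r"])
      (auto simp: lessThan_atLeast0 min_diff)
  also have "\<dots> = (\<Sum>l\<in>{0..<min m m' - r}. ?g (l + r))"
    by (simp only: add.commute)
  also have "\<dots> = (\<Sum>l\<in>{r..<min m m'}. ?g l)"
    using rs sum.shift_bounds_nat_ivl[of ?g 0 r "min m m' - r"] by simp
  also have "\<dots> = (\<Sum>l\<in>{r..<r + s}. ?g l) + (\<Sum>l\<in>{r + s..<min m m'}. ?g l)"
    using rs by (subst sum.atLeastLessThan_concat) auto
  also have "\<dots> = (\<Sum>l\<in>{r..<r + s}. c l * (X $$ (i, l) * Y $$ (j, l)))
      + e * (\<Sum>l\<in>{r + s..<min m m'}. X $$ (i, l) * Y $$ (j, l))"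
    by (simp add: sum_distrib_left)
  finally show ?thesis .
qed

lemma index_sum_mats_outer_col:
  fixes X Y :: "real mat"
  assumes "X \<in> carrier_mat n m" "Y \<in> carrier_mat n' m'" "b \<le> min m m'" "i < n" "j < n'"
  shows "sum_mats n n' (\<lambda>l. c l \<cdot>\<^sub>m outer (col X l) (col Y l)) a b $$ (i, j)
       = (\<Sum>l\<in>{a..<b}. c l * (X $$ (i, l) * Y $$ (j, l)))"
  using assms by (subst index_sum_mats) (auto simp: outer_def intro!: sum.cong)

lemma weighted_projection_eq_sum_mats:
  fixes X Y :: "real mat" and c \<sigma> :: "nat \<Rightarrow> real"
  assumes X: "X \<in> carrier_mat n m" and Y: "Y \<in> carrier_mat n m'"
    and rs: "r + s \<le> m" "r + s \<le> m'"
    and \<sigma>: "\<And>l. \<sigma> l = (if l < s then c (r + l) else 0)"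
  shows "col_range X r m * rect_diag_mat (m - r) (m - r) (\<lambda>l. 1 / (1 - (\<sigma> l)\<^sup>2))
           * transpose_mat (col_range X r m)
       + col_range X r m * rect_diag_mat (m - r) (m' - r) (\<lambda>l. - (\<sigma> l / (1 - (\<sigma> l)\<^sup>2)))
           * transpose_mat (col_range Y r m')
     = sum_mats n n (\<lambda>i. (1 / (1 - (c i)\<^sup>2)) \<cdot>\<^sub>m outer (col X i) (col X i)) r (r + s)
       - sum_mats n n (\<lambda>i. (c i / (1 - (c i)\<^sup>2)) \<cdot>\<^sub>m outer (col X i) (col Y i)) r (r + s)
       + sum_mats n n (\<lambda>i. outer (col X i) (col X i)) (r + s) m"
    (is "?P = ?S1 - ?S2 + ?S3")
proof -
  have diag_weight: "(\<lambda>l. 1 / (1 - (\<sigma> l)\<^sup>2)) = (\<lambda>l. if l < s then 1 / (1 - (c (r + l))\<^sup>2) else 1)"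
    and offdiag_weight: "(\<lambda>l. - (\<sigma> l / (1 - (\<sigma> l)\<^sup>2)))
      = (\<lambda>l. if l < s then - (c (r + l) / (1 - (c (r + l))\<^sup>2)) else 0)"
    by (auto simp: \<sigma>)
  have "outer (col X l) (col X l) \<in> carrier_mat n n" "outer (col X l) (col Y l) \<in> carrier_mat n n" for l
    using X Y by (simp_all add: outer_def)
  then have S1: "?S1 \<in> carrier_mat n n" and S2: "?S2 \<in> carrier_mat n n" and S3: "?S3 \<in> carrier_mat n n"
    by (auto intro!: sum_mats_carrier)
  show ?thesis
  proof (rule eq_matI)
    fix i j assume "i < dim_row (?S1 - ?S2 + ?S3)" "j < dim_col (?S1 - ?S2 + ?S3)"
    then have i: "i < n" and j: "j < n" using S1 S2 S3 by auto
    have S3_sum: "?S3 $$ (i, j) = (\<Sum>l\<in>{r + s..<m}. X $$ (i, l) * X $$ (j, l))"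
      using X i j by (subst index_sum_mats) (auto simp: outer_def intro!: sum.cong)
    show "?P $$ (i, j) = (?S1 - ?S2 + ?S3) $$ (i, j)"
      using X Y rs i j S1 S2 S3
        index_col_range_rect_diag_mult_transpose[OF X X _ i j, where c = "\<lambda>l. 1 / (1 - (c l)\<^sup>2)" and e = 1]
        index_col_range_rect_diag_mult_transpose[OF X Y _ i j,
          where c = "\<lambda>l. - (c l / (1 - (c l)\<^sup>2))" and e = 0]
      unfolding diag_weight offdiag_weight
      by (simp add: index_sum_mats_outer_col S3_sum sum_negf del: index_mult_mat(1))
  qed (use S1 S2 S3 X Y in auto)
qed

section \<open>Gram inverses and orthogonal projections\<close>

lemma minv_eqI:
  fixes G :: "'a::field mat"
  assumes G: "G \<in> carrier_mat m m" and H: "H \<in> carrier_mat m m" and HG: "H * G = 1\<^sub>m m"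
  shows "minv G = H"
proof -
  have "G * H = 1\<^sub>m m" using mat_mult_left_right_inverse[OF H G HG] .
  then have "G \<in> Units (ring_mat TYPE('a) m ())"
    using G H HG by (auto simp: Units_def ring_mat_def)
  then obtain B where B: "mat_inverse G = Some B"
    using mat_inverse(1)[OF G, of "()"] by (cases "mat_inverse G") auto
  then have BG: "B * G = 1\<^sub>m m" and B_carrier: "B \<in> carrier_mat m m"
    using mat_inverse(2)[OF G] by auto
  have "B = B * (G * H)" using B_carrier \<open>G * H = 1\<^sub>m m\<close> by simp
  also have "\<dots> = (B * G) * H" using B_carrier G H by (simp add: assoc_mult_mat)
  also have "\<dots> = H" using BG H by simp
  finally show ?thesis by (simp add: minv_def B)
qed

lemma transpose_gram_inverse:
  fixes M :: "'a::field mat"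
  assumes M: "M \<in> carrier_mat n m" and H: "H \<in> carrier_mat m m"
    and HG: "H * (transpose_mat M * M) = 1\<^sub>m m"
  shows "transpose_mat H = H"
proof -
  let ?G = "transpose_mat M * M"
  have G: "?G \<in> carrier_mat m m" using M by simp
  have G_sym: "transpose_mat ?G = ?G"
    using M transpose_mult[of "transpose_mat M" m n M m] by simp
  have "transpose_mat H * ?G = transpose_mat (?G * H)"
    using transpose_mult[OF G H] G_sym by simp
  also have "\<dots> = 1\<^sub>m m" using mat_mult_left_right_inverse[OF H G HG] by simp
  finally have "minv ?G = transpose_mat H" using G H by (intro minv_eqI) auto
  moreover have "minv ?G = H" using G H HG by (rule minv_eqI)
  ultimately show ?thesis by simp
qed

lemma mult_gram_inverse_cancel:
  fixes M :: "'a::field mat"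
  assumes X: "X \<in> carrier_mat n' m" and M: "M \<in> carrier_mat n m" and H: "H \<in> carrier_mat m m"
    and HG: "H * (transpose_mat M * M) = 1\<^sub>m m"
  shows "X * H * transpose_mat M * M = X"
proof -
  have "X * H * transpose_mat M * M = X * (H * (transpose_mat M * M))"
    using X M H by (simp add: assoc_mult_mat[of _ n' m _ m _ m] assoc_mult_mat[of _ n' m _ n _ m])
  then show ?thesis using X HG by simp
qed

lemma gram_projection:
  fixes M :: "'a::field mat"
  assumes M: "M \<in> carrier_mat n m" and H: "H \<in> carrier_mat m m"
    and HG: "H * (transpose_mat M * M) = 1\<^sub>m m"
  defines "P \<equiv> M * H * transpose_mat M"
  shows "transpose_mat P = P" and "P * P = P" and "P * M = M"
    and "x \<in> carrier_vec n \<Longrightarrow> P *\<^sub>v x = M *\<^sub>v (H * transpose_mat M *\<^sub>v x)"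
proof -
  have P: "P \<in> carrier_mat n n" using M H by (simp add: P_def)
  have "transpose_mat P = transpose_mat (transpose_mat M) * transpose_mat (M * H)"
    unfolding P_def using M H by (intro transpose_mult) auto
  also have "\<dots> = M * (transpose_mat H * transpose_mat M)"
    using M H transpose_mult[of M n m H m] by simp
  finally show "transpose_mat P = P"
    using M H transpose_gram_inverse[OF M H HG] by (simp add: P_def assoc_mult_mat[of _ n m _ m _ n])
  show PM: "P * M = M" using mult_gram_inverse_cancel[OF M M H HG] by (simp add: P_def)
  have "P * P = (P * M) * H * transpose_mat M"
    using P M H by (simp add: P_def assoc_mult_mat[of _ n n _ m _ n] assoc_mult_mat[of _ n n _ m _ m]
        assoc_mult_mat[of _ n m _ m _ n])
  then show "P * P = P" using PM by (simp add: P_def)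
  show "x \<in> carrier_vec n \<Longrightarrow> P *\<^sub>v x = M *\<^sub>v (H * transpose_mat M *\<^sub>v x)"
    using M H by (simp add: P_def assoc_mult_mat_vec[of _ n m _ n] assoc_mult_mat_vec[of _ m m _ n])
qed

lemma vnorm_transpose_mult_le:
  assumes A: "A \<in> carrier_mat n q" and AA: "transpose_mat A * A = 1\<^sub>m q" and y: "y \<in> carrier_vec n"
  shows "vnorm (transpose_mat A *\<^sub>v y) \<le> vnorm y"
proof -
  define z where "z = transpose_mat A *\<^sub>v y"
  have z: "z \<in> carrier_vec q" using A y by (simp add: z_def)
  have Az: "A *\<^sub>v z \<in> carrier_vec n" using A z by simp
  have "transpose_mat A *\<^sub>v (A *\<^sub>v z) = z"
    using A z AA by (simp flip: assoc_mult_mat_vec[of _ q n])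
  then have AzAz: "(A *\<^sub>v z) \<bullet> (A *\<^sub>v z) = z \<bullet> z"
    using transpose_vec_mult_scalar[OF A z Az] by simp
  have yAz: "y \<bullet> (A *\<^sub>v z) = z \<bullet> z"
    using transpose_vec_mult_scalar[OF A z y] by (simp add: z_def)
  (* Pythagoras: |y|^2 = |A z|^2 + |y - A z|^2, the projection A A^T y being orthogonal *)
  have "0 \<le> (y - A *\<^sub>v z) \<bullet> (y - A *\<^sub>v z)"
    by (auto simp: scalar_prod_def intro!: sum_nonneg)
  also have "\<dots> = y \<bullet> y - z \<bullet> z"
    using y Az AzAz yAz comm_scalar_prod[OF y Az]
    by (simp add: minus_scalar_prod_distrib[of _ n] scalar_prod_minus_distrib[of _ n])
  finally show ?thesis by (simp add: vnorm_def flip: z_def)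
qed

lemma rect_diag_block_inverse:
  fixes \<sigma> :: "nat \<Rightarrow> real"
  assumes less_1: "\<And>i. i < min q k \<Longrightarrow> \<bar>\<sigma> i\<bar> < 1"
    and vanish: "\<And>i. min q k \<le> i \<Longrightarrow> \<sigma> i = 0"
  shows "four_block_mat
      (rect_diag_mat q q (\<lambda>i. 1 / (1 - (\<sigma> i)\<^sup>2))) (rect_diag_mat q k (\<lambda>i. - (\<sigma> i / (1 - (\<sigma> i)\<^sup>2))))
      (rect_diag_mat k q (\<lambda>i. - (\<sigma> i / (1 - (\<sigma> i)\<^sup>2)))) (rect_diag_mat k k (\<lambda>i. 1 / (1 - (\<sigma> i)\<^sup>2)))
    * four_block_mat (1\<^sub>m q) (rect_diag_mat q k \<sigma>) (rect_diag_mat k q \<sigma>) (1\<^sub>m k) = 1\<^sub>m (q + k)"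
    (is "?H * ?G = _")
proof -
  have "1 - (\<sigma> i)\<^sup>2 \<noteq> 0" for i
    using less_1[of i] vanish[of i] by (cases "i < min q k") (auto simp: power2_eq_1_iff)
  then have diag: "1 / (1 - (\<sigma> i)\<^sup>2) - \<sigma> i * \<sigma> i / (1 - (\<sigma> i)\<^sup>2) = 1" for i
    by (auto simp: field_simps power2_eq_square)
  have "\<sigma> i = 0" if "\<not> i < q \<or> \<not> i < k" for i using that vanish by auto
  then have "?H * ?G = four_block_mat (1\<^sub>m q) (0\<^sub>m q k) (0\<^sub>m k q) (1\<^sub>m k)"
    unfolding one_eq_rect_diag_mat zero_eq_rect_diag_mat
    by (subst mult_four_block_mat[of _ q q _ k _ k _ _ q _ k])
      (auto simp: rect_diag_mat_mult_rect_diag_mat rect_diag_mat_add diag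
        intro!: cong_four_block_mat rect_diag_mat_cong)
  then show ?thesis by simp
qed

section \<open>Principal bases\<close>

lemma transpose_mult_rotated:
  fixes Z W U V :: "'a::comm_ring_1 mat"
  assumes "Z \<in> carrier_mat n p" "W \<in> carrier_mat n K" "U \<in> carrier_mat p p" "V \<in> carrier_mat K K"
  shows "transpose_mat (Z * U) * (W * V) = transpose_mat U * (transpose_mat Z * W) * V"
  using assms by (simp add: transpose_mult[of Z n p U p] assoc_mult_mat[of _ p p _ n _ K]
      assoc_mult_mat[of _ p p _ K _ K]
      assoc_mult_mat[of _ p n _ n _ K] assoc_mult_mat[of _ p n _ K _ K])

lemma svd_rotated_bases:
  fixes Z W U V S :: "'a::comm_ring_1 mat"
  assumes Z: "Z \<in> carrier_mat n p" and ZZ: "transpose_mat Z * Z = 1\<^sub>m p"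
    and W: "W \<in> carrier_mat n K" and WW: "transpose_mat W * W = 1\<^sub>m K"
    and U: "U \<in> carrier_mat p p" and UU: "transpose_mat U * U = 1\<^sub>m p"
    and V: "V \<in> carrier_mat K K" and VV: "transpose_mat V * V = 1\<^sub>m K"
    and S: "S \<in> carrier_mat p K" and svd: "transpose_mat Z * W = U * S * transpose_mat V"
  shows "transpose_mat (Z * U) * (Z * U) = 1\<^sub>m p"
    and "transpose_mat (W * V) * (W * V) = 1\<^sub>m K"
    and "transpose_mat (Z * U) * (W * V) = S"
proof -
  show "transpose_mat (Z * U) * (Z * U) = 1\<^sub>m p"
    using transpose_mult_rotated[OF Z Z U U] ZZ UU U by simp
  show "transpose_mat (W * V) * (W * V) = 1\<^sub>m K"
    using transpose_mult_rotated[OF W W V V] WW VV V by simp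
  have "transpose_mat U * (U * S * transpose_mat V) * V = (transpose_mat U * U) * S * (transpose_mat V * V)"
    using U S V by (simp add: assoc_mult_mat[of _ p p _ p _ K] assoc_mult_mat[of _ p p _ K _ K]
        assoc_mult_mat[of _ p K _ K _ K] assoc_mult_mat[of _ K K _ K _ K])
  then show "transpose_mat (Z * U) * (W * V) = S"
    using transpose_mult_rotated[OF Z W U V] svd UU VV S by simp
qed

locale principal_bases =
  fixes n q k :: nat and A B :: "real mat" and \<sigma> :: "nat \<Rightarrow> real"
  assumes A_carrier: "A \<in> carrier_mat n q" and B_carrier: "B \<in> carrier_mat n k"
    and orthonormal_A: "transpose_mat A * A = 1\<^sub>m q"
    and orthonormal_B: "transpose_mat B * B = 1\<^sub>m k"
    and cross_gram: "transpose_mat A * B = rect_diag_mat q k \<sigma>"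
    and sigma_abs_less_1: "\<And>i. i < min q k \<Longrightarrow> \<bar>\<sigma> i\<bar> < 1"
    \<comment> \<open>The zero padding lets the diagonal blocks of the inverse Gram matrix use the same weights.\<close>
    and sigma_beyond_min: "\<And>i. min q k \<le> i \<Longrightarrow> \<sigma> i = 0"
begin

abbreviation "pair_mat \<equiv> hcat A B"
abbreviation "gram_inv \<equiv> minv (transpose_mat pair_mat * pair_mat)"
abbreviation "proj_C \<equiv> hcat A (0\<^sub>m n k) * gram_inv * transpose_mat pair_mat"
abbreviation "proj_N \<equiv> hcat (0\<^sub>m n q) B * gram_inv * transpose_mat pair_mat"
abbreviation "diag_weight \<equiv> \<lambda>i. 1 / (1 - (\<sigma> i)\<^sup>2)"
abbreviation "offdiag_weight \<equiv> \<lambda>i. - (\<sigma> i / (1 - (\<sigma> i)\<^sup>2))"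

lemma pair_mat_carrier: "pair_mat \<in> carrier_mat n (q + k)"
  using hcat_carrier[OF A_carrier B_carrier] .

lemma left_block_carrier: "hcat A (0\<^sub>m n k) \<in> carrier_mat n (q + k)"
  using hcat_carrier[OF A_carrier, of "0\<^sub>m n k" k] by simp

lemma right_block_carrier: "hcat (0\<^sub>m n q) B \<in> carrier_mat n (q + k)"
  using hcat_carrier[OF _ B_carrier, of "0\<^sub>m n q" q] by simp

lemma gram_pair_mat:
  "transpose_mat pair_mat * pair_mat
   = four_block_mat (1\<^sub>m q) (rect_diag_mat q k \<sigma>) (rect_diag_mat k q \<sigma>) (1\<^sub>m k)"
proof -
  have "transpose_mat B * A = transpose_mat (transpose_mat A * B)"
    using A_carrier B_carrier by (simp add: transpose_mult[of _ q n _ k])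
  then have "transpose_mat B * A = rect_diag_mat k q \<sigma>"
    by (simp add: cross_gram transpose_rect_diag_mat)
  then show ?thesis
    using transpose_hcat_mult_hcat[OF A_carrier B_carrier A_carrier B_carrier]
    by (simp add: orthonormal_A orthonormal_B cross_gram)
qed

lemma gram_inv_eq:
  "gram_inv = four_block_mat (rect_diag_mat q q diag_weight) (rect_diag_mat q k offdiag_weight)
     (rect_diag_mat k q offdiag_weight) (rect_diag_mat k k diag_weight)"
  using rect_diag_block_inverse[where \<sigma> = \<sigma> and q = q and k = k, OF sigma_abs_less_1 sigma_beyond_min]
    pair_mat_carrier
  by (intro minv_eqI[of _ "q + k"]) (auto simp: gram_pair_mat)

lemma gram_inv_carrier: "gram_inv \<in> carrier_mat (q + k) (q + k)"
  by (simp add: gram_inv_eq)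

lemma gram_inv_left: "gram_inv * (transpose_mat pair_mat * pair_mat) = 1\<^sub>m (q + k)"
  using rect_diag_block_inverse[where \<sigma> = \<sigma> and q = q and k = k, OF sigma_abs_less_1 sigma_beyond_min]
  by (subst gram_inv_eq) (simp add: gram_pair_mat)

lemma proj_C_carrier: "proj_C \<in> carrier_mat n n"
  using left_block_carrier pair_mat_carrier gram_inv_carrier by simp

lemma proj_N_carrier: "proj_N \<in> carrier_mat n n"
  using right_block_carrier pair_mat_carrier gram_inv_carrier by simp

lemma proj_C_eq:
  "proj_C = A * rect_diag_mat q q diag_weight * transpose_mat A
          + A * rect_diag_mat q k offdiag_weight * transpose_mat B"
  using A_carrier B_carrier
  by (simp add: gram_inv_eq hcat_mult_four_block_mat[of _ n q _ k _ q _ k]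
      hcat_mult_transpose_hcat[of _ n q _ k _ n])

lemma proj_N_eq:
  "proj_N = B * rect_diag_mat k k diag_weight * transpose_mat B
          + B * rect_diag_mat k q offdiag_weight * transpose_mat A"
proof -
  have "proj_N = B * rect_diag_mat k q offdiag_weight * transpose_mat A
               + B * rect_diag_mat k k diag_weight * transpose_mat B"
    using A_carrier B_carrier
    by (simp add: gram_inv_eq hcat_mult_four_block_mat[of _ n q _ k _ q _ k]
        hcat_mult_transpose_hcat[of _ n q _ k _ n])
  also have "\<dots> = B * rect_diag_mat k k diag_weight * transpose_mat B
               + B * rect_diag_mat k q offdiag_weight * transpose_mat A"
    using A_carrier B_carrier by (intro comm_add_mat[of _ n n]) auto
  finally show ?thesis .
qed

lemma proj_C_plus_proj_N: "proj_C + proj_N = pair_mat * gram_inv * transpose_mat pair_mat"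
proof -
  have "proj_C + proj_N
      = (hcat A (0\<^sub>m n k) * gram_inv + hcat (0\<^sub>m n q) B * gram_inv) * transpose_mat pair_mat"
    using left_block_carrier right_block_carrier gram_inv_carrier pair_mat_carrier
    by (intro add_mult_distrib_mat[symmetric]) auto
  also have "hcat A (0\<^sub>m n k) * gram_inv + hcat (0\<^sub>m n q) B * gram_inv
      = (hcat A (0\<^sub>m n k) + hcat (0\<^sub>m n q) B) * gram_inv"
    using left_block_carrier right_block_carrier gram_inv_carrier
    by (intro add_mult_distrib_mat[symmetric]) auto
  also have "hcat A (0\<^sub>m n k) + hcat (0\<^sub>m n q) B = pair_mat"
    using A_carrier B_carrier by (simp add: hcat_add[of _ n q _ k])
  finally show ?thesis .
qed

lemma proj_sum_is_projection:
  "proj_C + proj_N = pair_mat * gram_inv * transpose_mat pair_mat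
   \<and> transpose_mat (proj_C + proj_N) = proj_C + proj_N
   \<and> (proj_C + proj_N) * (proj_C + proj_N) = proj_C + proj_N
   \<and> (proj_C + proj_N) * pair_mat = pair_mat
   \<and> (\<forall>x \<in> carrier_vec n. \<exists>c \<in> carrier_vec (dim_col pair_mat).
        (proj_C + proj_N) *\<^sub>v x = pair_mat *\<^sub>v c)"
  using gram_projection[OF pair_mat_carrier gram_inv_carrier gram_inv_left]
    pair_mat_carrier gram_inv_carrier
  by (auto simp: proj_C_plus_proj_N)

lemma proj_C_mult_pair_mat: "proj_C * pair_mat = hcat A (0\<^sub>m n k)"
  by (rule mult_gram_inverse_cancel[OF left_block_carrier pair_mat_carrier gram_inv_carrier gram_inv_left])

lemma proj_N_mult_pair_mat: "proj_N * pair_mat = hcat (0\<^sub>m n q) B"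
  by (rule mult_gram_inverse_cancel[OF right_block_carrier pair_mat_carrier gram_inv_carrier gram_inv_left])

lemma proj_C_apply:
  assumes "c \<in> carrier_vec q" "d \<in> carrier_vec k"
  shows "proj_C *\<^sub>v (A *\<^sub>v c + B *\<^sub>v d) = A *\<^sub>v c"
proof -
  have "proj_C *\<^sub>v (A *\<^sub>v c + B *\<^sub>v d) = (proj_C * pair_mat) *\<^sub>v (c @\<^sub>v d)"
    using assms A_carrier B_carrier proj_C_carrier pair_mat_carrier
    by (simp add: hcat_mult_append_vec)
  also have "\<dots> = A *\<^sub>v c + 0\<^sub>m n k *\<^sub>v d"
    using assms A_carrier by (simp add: proj_C_mult_pair_mat hcat_mult_append_vec[of _ n q _ k])
  also have "\<dots> = A *\<^sub>v c"
    using assms A_carrier by (auto intro!: eq_vecI)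
  finally show ?thesis .
qed

lemma proj_N_apply:
  assumes "c \<in> carrier_vec q" "d \<in> carrier_vec k"
  shows "proj_N *\<^sub>v (A *\<^sub>v c + B *\<^sub>v d) = B *\<^sub>v d"
proof -
  have "proj_N *\<^sub>v (A *\<^sub>v c + B *\<^sub>v d) = (proj_N * pair_mat) *\<^sub>v (c @\<^sub>v d)"
    using assms A_carrier B_carrier proj_N_carrier pair_mat_carrier
    by (simp add: hcat_mult_append_vec)
  also have "\<dots> = 0\<^sub>m n q *\<^sub>v c + B *\<^sub>v d"
    using assms B_carrier by (simp add: proj_N_mult_pair_mat hcat_mult_append_vec[of _ n q _ k])
  also have "\<dots> = B *\<^sub>v d"
    using assms B_carrier by (auto intro!: eq_vecI)
  finally show ?thesis .
qed

lemma proj_C_mult_A: "proj_C * A = A"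
proof -
  have "proj_C * A = proj_C * col_range pair_mat 0 q"
    using A_carrier col_range_hcat_left[of A B] by simp
  also have "\<dots> = col_range (proj_C * pair_mat) 0 q"
    using pair_mat_carrier by (simp add: col_range_mult)
  also have "\<dots> = A"
    using A_carrier col_range_hcat_left[of A "0\<^sub>m n k"] by (simp add: proj_C_mult_pair_mat)
  finally show ?thesis .
qed

lemma vnorm_transpose_A_le:
  assumes x: "x \<in> carrier_vec n"
  shows "vnorm (transpose_mat A *\<^sub>v x) \<le> vnorm (transpose_mat proj_C *\<^sub>v x)"
proof -
  have "transpose_mat A * transpose_mat proj_C = transpose_mat A"
    using transpose_mult[OF proj_C_carrier A_carrier] proj_C_mult_A by simp
  then have "transpose_mat A *\<^sub>v x = transpose_mat A *\<^sub>v (transpose_mat proj_C *\<^sub>v x)"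
    using A_carrier proj_C_carrier x by (simp flip: assoc_mult_mat_vec[of _ q n _ n])
  then show ?thesis
    using vnorm_transpose_mult_le[OF A_carrier orthonormal_A] proj_C_carrier x by simp
qed

end

lemma principal_bases_col_range:
  fixes Zt Wt S :: "real mat"
  assumes Zt: "Zt \<in> carrier_mat n p" and Wt: "Wt \<in> carrier_mat n K"
    and ZZ: "transpose_mat Zt * Zt = 1\<^sub>m p" and WW: "transpose_mat Wt * Wt = 1\<^sub>m K"
    and ZW: "transpose_mat Zt * Wt = S"
    and diag: "\<forall>i<p. \<forall>j<K. i \<noteq> j \<longrightarrow> S $$ (i, j) = 0"
    and rs: "r + s \<le> min p K"
    and mid: "\<And>i. r \<le> i \<Longrightarrow> i < r + s \<Longrightarrow> \<bar>S $$ (i, i)\<bar> < 1"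
    and zero: "\<And>i. r + s \<le> i \<Longrightarrow> i < min p K \<Longrightarrow> S $$ (i, i) = 0"
  shows "principal_bases n (p - r) (K - r) (col_range Zt r p) (col_range Wt r K)
           (\<lambda>i. if i < s then S $$ (r + i, r + i) else 0)"
proof
  show "transpose_mat (col_range Zt r p) * col_range Zt r p = 1\<^sub>m (p - r)"
    using Zt ZZ by (auto simp: transpose_col_range_mult_col_range intro!: eq_matI)
  show "transpose_mat (col_range Wt r K) * col_range Wt r K = 1\<^sub>m (K - r)"
    using Wt WW by (auto simp: transpose_col_range_mult_col_range intro!: eq_matI)
  have "S $$ (r + i, r + i) = 0" if "s \<le> i" "i < p - r" "i < K - r" for i
    using that by (intro zero) auto
  then show "transpose_mat (col_range Zt r p) * col_range Wt r K
    = rect_diag_mat (p - r) (K - r) (\<lambda>i. if i < s then S $$ (r + i, r + i) else 0)"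
    using Zt Wt diag by (auto simp: transpose_col_range_mult_col_range ZW intro!: eq_matI)
qed (use Zt Wt rs mid in auto)

theorem lemma1:
  fixes n p K r s :: nat
    and Z W U V Sig Zt Wt M PC PN :: "real mat"
  assumes Z: "Z \<in> carrier_mat n p" and ZZ: "transpose_mat Z * Z = 1\<^sub>m p"
    and W: "W \<in> carrier_mat n K" and WW: "transpose_mat W * W = 1\<^sub>m K"
    and U: "U \<in> carrier_mat p p" and UU: "transpose_mat U * U = 1\<^sub>m p" and UU': "U * transpose_mat U = 1\<^sub>m p"
    and V: "V \<in> carrier_mat K K" and VV: "transpose_mat V * V = 1\<^sub>m K" and VV': "V * transpose_mat V = 1\<^sub>m K"
    and Sig: "Sig \<in> carrier_mat p K"
    and svd: "transpose_mat Z * W = U * Sig * transpose_mat V"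
    and diag: "\<forall>i<p. \<forall>j<K. i \<noteq> j \<longrightarrow> Sig $$ (i,j) = 0"
    and rs: "r + s \<le> min p K"
    and sig_one: "\<forall>i<r. Sig $$ (i,i) = 1"
    and sig_mid: "\<forall>i. r \<le> i \<and> i < r + s \<longrightarrow> 0 < Sig $$ (i,i) \<and> Sig $$ (i,i) < 1"
    and sig_mono: "\<forall>i j. r \<le> i \<and> i \<le> j \<and> j < r + s \<longrightarrow> Sig $$ (j,j) \<le> Sig $$ (i,i)"
    and sig_zero: "\<forall>i. r + s \<le> i \<and> i < min p K \<longrightarrow> Sig $$ (i,i) = 0"
    and Zt: "Zt = Z * U" and Wt: "Wt = W * V"
    and M: "M = hcat (col_range Zt r p) (col_range Wt r K)"
    and PC: "PC = hcat (col_range Zt r p) (0\<^sub>m n (K - r)) * minv (transpose_mat M * M) * transpose_mat M"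
    and PN: "PN = hcat (0\<^sub>m n (p - r)) (col_range Wt r K) * minv (transpose_mat M * M) * transpose_mat M"
  shows
    "(PC + PN = M * minv (transpose_mat M * M) * transpose_mat M
      \<and> transpose_mat (PC + PN) = PC + PN
      \<and> (PC + PN) * (PC + PN) = PC + PN
      \<and> (PC + PN) * M = M
      \<and> (\<forall>x \<in> carrier_vec n. \<exists>c \<in> carrier_vec (dim_col M). (PC + PN) *\<^sub>v x = M *\<^sub>v c))
   \<and> (PC = sum_mats n n (\<lambda>i. (1 / (1 - (Sig $$ (i,i))\<^sup>2)) \<cdot>\<^sub>m outer (col Zt i) (col Zt i)) r (r + s)
          - sum_mats n n (\<lambda>i. (Sig $$ (i,i) / (1 - (Sig $$ (i,i))\<^sup>2)) \<cdot>\<^sub>m outer (col Zt i) (col Wt i)) r (r + s)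
          + sum_mats n n (\<lambda>i. outer (col Zt i) (col Zt i)) (r + s) p
      \<and> PN = sum_mats n n (\<lambda>i. (1 / (1 - (Sig $$ (i,i))\<^sup>2)) \<cdot>\<^sub>m outer (col Wt i) (col Wt i)) r (r + s)
          - sum_mats n n (\<lambda>i. (Sig $$ (i,i) / (1 - (Sig $$ (i,i))\<^sup>2)) \<cdot>\<^sub>m outer (col Wt i) (col Zt i)) r (r + s)
          + sum_mats n n (\<lambda>i. outer (col Wt i) (col Wt i)) (r + s) K)
   \<and> (\<forall>c \<in> carrier_vec (p - r). \<forall>d \<in> carrier_vec (K - r).
        PC *\<^sub>v (col_range Zt r p *\<^sub>v c + col_range Wt r K *\<^sub>v d) = col_range Zt r p *\<^sub>v c
      \<and> PN *\<^sub>v (col_range Zt r p *\<^sub>v c + col_range Wt r K *\<^sub>v d) = col_range Wt r K *\<^sub>v d)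
   \<and> (\<forall>x \<in> carrier_vec n.
        vnorm (transpose_mat (col_range Zt r p) *\<^sub>v x) \<le> vnorm (transpose_mat PC *\<^sub>v x))"
proof -
  have Zt_carrier: "Zt \<in> carrier_mat n p" and Wt_carrier: "Wt \<in> carrier_mat n K"
    using Z U W V by (simp_all add: Zt Wt)
  note rotated = svd_rotated_bases[OF Z ZZ W WW U UU V VV Sig svd, folded Zt Wt]
  define \<sigma> where "\<sigma> i = (if i < s then Sig $$ (r + i, r + i) else 0)" for i
  have "\<bar>Sig $$ (i, i)\<bar> < 1" if "r \<le> i" "i < r + s" for i
    using sig_mid that by fastforce
  moreover have "Sig $$ (i, i) = 0" if "r + s \<le> i" "i < min p K" for i
    using sig_zero that by blast
  ultimately have pb: "principal_bases n (p - r) (K - r) (col_range Zt r p) (col_range Wt r K) \<sigma>"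
    unfolding \<sigma>_def by (rule principal_bases_col_range[OF Zt_carrier Wt_carrier rotated diag rs])
  have "\<sigma> i = (if i < s then Sig $$ (r + i, r + i) else 0)" for i by (simp add: \<sigma>_def)
  note sums = weighted_projection_eq_sum_mats[where c = "\<lambda>i. Sig $$ (i, i)", OF _ _ _ _ this]
  have "r + s \<le> p" "r + s \<le> K" using rs by auto
  note PC_sums = principal_bases.proj_C_eq[OF pb, folded M, folded PC,
      unfolded sums[OF Zt_carrier Wt_carrier this]]
    and PN_sums = principal_bases.proj_N_eq[OF pb, folded M, folded PN,
      unfolded sums[OF Wt_carrier Zt_carrier this(2,1)]]
  show ?thesis
    using principal_bases.proj_sum_is_projection[OF pb, folded M, folded PC PN] PC_sums PN_sums
      principal_bases.proj_C_apply[OF pb, folded M, folded PC]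
      principal_bases.proj_N_apply[OF pb, folded M, folded PN]
      principal_bases.vnorm_transpose_A_le[OF pb, folded M, folded PC]
    by blast
qed

end
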